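(* Let $(X,d)$ be a totally bounded metric space, $\emptyset\ne F\subseteq X$ with a representation $(\tilde F_k)$, and let $G,H:\mathbb{R}_+\to\mathbb{R}_+$ satisfy properties (G) and (H). Let $(x_n)$ be a sequence in $X$ that is uniformly $(G,H)$-Fej\'er monotone w.r.t. $F$ and has approximate $F$-points. Then $(x_n)$ is Cauchy.
   Context: A representation of $F$: sets $\tilde F_k\subseteq X$ with $F=\bigcap_k\tilde F_k$; $AF_k:=\bigcap_{l\le k}\tilde F_l$. Property (G): $a_n\to0$ implies $G(a_n)\to0$ for all sequences $(a_n)$ in $\mathbb{R}_+$; property (H): $H(a_n)\to0$ implies $a_n\to0$. $(x_n)$ is uniformly $(G,H)$-Fej\'er monotone w.r.t. $F$ if for all $r,n,m\in\mathbb{N}$ there exists $k\in\mathbb{N}$ such that for all $p\in AF_k$ and all $l\le m$, $H(d(x_{n+l},p))<G(d(x_n,p))+\frac1{r+1}$. $(x_n)$ has approximate $F$-points if for every $k\in\mathbb{N}$ there is $N$ with $x_N\in AF_k$. *)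

theory Defs
  imports "HOL-Analysis.Analysis"
begin

definition prop_G :: "(real \<Rightarrow> real) \<Rightarrow> bool" where
  "prop_G G \<longleftrightarrow> (\<forall>a::nat \<Rightarrow> real. (\<forall>n. a n \<ge> 0) \<longrightarrow> a \<longlonglongrightarrow> 0 \<longrightarrow> (\<lambda>n. G (a n)) \<longlonglongrightarrow> 0)"

definition prop_H :: "(real \<Rightarrow> real) \<Rightarrow> bool" where
  "prop_H H \<longleftrightarrow> (\<forall>a::nat \<Rightarrow> real. (\<forall>n. a n \<ge> 0) \<longrightarrow> (\<lambda>n. H (a n)) \<longlonglongrightarrow> 0 \<longrightarrow> a \<longlonglongrightarrow> 0)"

definition AF :: "(nat \<Rightarrow> 'a set) \<Rightarrow> nat \<Rightarrow> 'a set" where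
  "AF Ft k = (\<Inter>l\<in>{..k}. Ft l)"

definition uniformly_GH_fejer ::
  "(real \<Rightarrow> real) \<Rightarrow> (real \<Rightarrow> real) \<Rightarrow> (nat \<Rightarrow> 'a::metric_space set) \<Rightarrow> (nat \<Rightarrow> 'a) \<Rightarrow> bool" where
  "uniformly_GH_fejer G H Ft x \<longleftrightarrow>
     (\<forall>r n m::nat. \<exists>k::nat. \<forall>p\<in>AF Ft k. \<forall>l\<le>m.
        H (dist (x (n + l)) p) < G (dist (x n) p) + 1 / (real r + 1))"

definition has_approx_F_points :: "(nat \<Rightarrow> 'a set) \<Rightarrow> (nat \<Rightarrow> 'a) \<Rightarrow> bool" where
  "has_approx_F_points Ft x \<longleftrightarrow> (\<forall>k. \<exists>N. x N \<in> AF Ft k)"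

end

theory Submission
  imports Defs
begin

text \<open>It suffices to show metastability in Tao's sense. Suppose it fails: for some \<epsilon> and
  horizon g, every x n moves \<epsilon> away within g n steps. Choose \<delta> with H t < \<delta> \<Longrightarrow> t < \<epsilon>/2
  and \<eta> with t < \<eta> \<Longrightarrow> G t < \<delta>/2. Approximate F-points yield indices \<nu> j such that for all
  i < j the point x (\<nu> j) lies in the set AF Ft k that the uniform Fejer property requires at
  x (\<nu> i) for horizon g (\<nu> i). By total boundedness two of these points, x (\<nu> i) and
  p = x (\<nu> j), are \<eta>-close. Fejer monotonicity with respect to p then keeps the next
  g (\<nu> i) iterates within \<epsilon>/2 of p, hence within \<epsilon> of x (\<nu> i), a contradiction.\<close>

definition metastable :: "(nat \<Rightarrow> 'a::metric_space) \<Rightarrow> bool" where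
  "metastable x \<longleftrightarrow> (\<forall>e>0. \<forall>g::nat \<Rightarrow> nat. \<exists>n. \<forall>l\<le>g n. dist (x n) (x (n + l)) < e)"

lemma metastable_imp_Cauchy:
  assumes "metastable x"
  shows "Cauchy x"
  unfolding Cauchy_altdef2
proof (intro allI impI)
  fix e :: real
  assume "e > 0"
  show "\<exists>N. \<forall>n\<ge>N. dist (x n) (x N) < e"
  proof (rule ccontr)
    assume "\<not> ?thesis"
    then have "\<forall>N. \<exists>l. \<not> dist (x N) (x (N + l)) < e"
      by (metis dist_commute le_add_diff_inverse)
    then obtain g where "\<And>N. \<not> dist (x N) (x (N + g N)) < e"
      by metis
    with assms \<open>e > 0\<close> show False
      unfolding metastable_def by blast
  qed
qed

lemma tendsto_zero_if_below_inverse: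
  fixes a :: "nat \<Rightarrow> real"
  assumes "\<And>n. 0 \<le> a n" "\<And>n. a n < inverse (real (Suc n))"
  shows "a \<longlonglongrightarrow> 0"
proof (rule real_tendsto_sandwich[OF _ _ tendsto_const LIMSEQ_inverse_real_of_nat])
  show "\<forall>\<^sub>F n in sequentially. 0 \<le> a n" "\<forall>\<^sub>F n in sequentially. a n \<le> inverse (real (Suc n))"
    by (intro always_eventually allI assms(1) less_imp_le assms(2))+
qed

lemma prop_G_modulus:
  assumes "prop_G G" "d > 0"
  obtains h where "h > 0" "\<And>t. 0 \<le> t \<Longrightarrow> t < h \<Longrightarrow> G t < d"
proof -
  have "\<exists>h>0. \<forall>t\<ge>0. t < h \<longrightarrow> G t < d"
  proof (rule ccontr)
    assume "\<not> ?thesis"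
    then have "\<forall>n. \<exists>t\<ge>0. t < inverse (real (Suc n)) \<and> d \<le> G t"
      by (metis not_le inverse_positive_iff_positive of_nat_0_less_iff zero_less_Suc)
    then obtain a where a: "\<And>n. 0 \<le> a n" "\<And>n. a n < inverse (real (Suc n))" "\<And>n. d \<le> G (a n)"
      by metis
    have "a \<longlonglongrightarrow> 0"
      using a(1,2) by (rule tendsto_zero_if_below_inverse)
    then have "(\<lambda>n. G (a n)) \<longlonglongrightarrow> 0"
      using assms(1) a(1) unfolding prop_G_def by blast
    then obtain n where "\<bar>G (a n)\<bar> < d"
      using assms(2) by (metis LIMSEQ_D diff_zero le_refl real_norm_def)
    with a(3)[of n] show False by simp
  qed
  with that show ?thesis by blast
qed

lemma prop_H_modulus:
  assumes "prop_H H" "\<And>t. 0 \<le> t \<Longrightarrow> 0 \<le> H t" "e > 0"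
  obtains d where "d > 0" "\<And>t. 0 \<le> t \<Longrightarrow> H t < d \<Longrightarrow> t < e"
proof -
  have "\<exists>d>0. \<forall>t\<ge>0. H t < d \<longrightarrow> t < e"
  proof (rule ccontr)
    assume "\<not> ?thesis"
    then have "\<forall>n. \<exists>t\<ge>0. H t < inverse (real (Suc n)) \<and> e \<le> t"
      by (metis not_le inverse_positive_iff_positive of_nat_0_less_iff zero_less_Suc)
    then obtain a where a: "\<And>n. 0 \<le> a n" "\<And>n. H (a n) < inverse (real (Suc n))" "\<And>n. e \<le> a n"
      by metis
    have "(\<lambda>n. H (a n)) \<longlonglongrightarrow> 0"
      using a(1,2) assms(2) by (intro tendsto_zero_if_below_inverse) auto
    then have "a \<longlonglongrightarrow> 0"
      using assms(1) a(1) unfolding prop_H_def by blast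
    then obtain n where "\<bar>a n\<bar> < e"
      using assms(3) by (metis LIMSEQ_D diff_zero le_refl real_norm_def)
    with a(3)[of n] show False by simp
  qed
  with that show ?thesis by blast
qed

lemma AF_antimono: "k \<le> k' \<Longrightarrow> AF Ft k' \<subseteq> AF Ft k"
  unfolding AF_def by auto

lemma approx_F_points_nested_indices:
  assumes "has_approx_F_points Ft x"
  obtains \<nu> :: "nat \<Rightarrow> nat" where "\<And>i j. i < j \<Longrightarrow> x (\<nu> j) \<in> AF Ft (k (\<nu> i))"
proof -
  obtain N where N: "\<And>k. x (N k) \<in> AF Ft k"
    using assms unfolding has_approx_F_points_def by metis
  define K where "K = rec_nat 0 (\<lambda>_ m. max m (k (N m)))"
  have K_Suc: "K (Suc j) = max (K j) (k (N (K j)))" for j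
    by (simp add: K_def)
  have "incseq K"
    by (rule incseq_SucI) (simp add: K_Suc)
  have "x (N (K j)) \<in> AF Ft (k (N (K i)))" if "i < j" for i j
  proof -
    have "k (N (K i)) \<le> K (Suc i)" by (simp add: K_Suc)
    also have "\<dots> \<le> K j" using \<open>incseq K\<close> \<open>i < j\<close> by (simp add: incseq_def)
    finally have "AF Ft (K j) \<subseteq> AF Ft (k (N (K i)))" by (rule AF_antimono)
    then show ?thesis using N[of "K j"] by blast
  qed
  then show ?thesis by (intro that[of "N \<circ> K"]) simp
qed

lemma totally_bounded_obtains_close_terms:
  fixes y :: "nat \<Rightarrow> 'a::metric_space"
  assumes "totally_bounded X" "\<And>n. y n \<in> X" "e > 0"
  obtains i j where "i < j" "dist (y i) (y j) < e"
proof -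
  have "e / 2 > 0" using assms(3) by simp
  then obtain C where C: "finite C" "X \<subseteq> (\<Union>c\<in>C. {z. dist c z < e / 2})"
    using assms(1) unfolding totally_bounded_metric by blast
  have "\<forall>n. \<exists>c\<in>C. dist c (y n) < e / 2"
    using assms(2) C(2) by blast
  then obtain c where c: "\<And>n. c n \<in> C" "\<And>n. dist (c n) (y n) < e / 2"
    by metis
  have "range c \<subseteq> C"
    using c(1) by blast
  then have "finite (range c)"
    using C(1) by (rule finite_subset)
  then have "\<not> inj c"
    by (meson range_inj_infinite)
  then obtain i j where "i \<noteq> j" "c i = c j"
    unfolding inj_def by blast
  then have "dist (y i) (y j) < e"
    using dist_triangle_half_r[OF c(2)[of i]] c(2)[of j] by simp
  show ?thesis
  proof (cases "i < j")
    case True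
    with \<open>dist (y i) (y j) < e\<close> show ?thesis by (intro that)
  next
    case False
    with \<open>i \<noteq> j\<close> have "j < i" by simp
    with \<open>dist (y i) (y j) < e\<close> show ?thesis by (intro that[of j i]) (simp_all add: dist_commute)
  qed
qed

lemma uniformly_GH_fejer_imp_metastable:
  assumes "totally_bounded X" "\<And>n. x n \<in> X"
    and "\<And>t. 0 \<le> t \<Longrightarrow> 0 \<le> H t" "prop_G G" "prop_H H"
    and "uniformly_GH_fejer G H Ft x" "has_approx_F_points Ft x"
  shows "metastable x"
  unfolding metastable_def
proof (intro allI impI)
  fix e :: real and g :: "nat \<Rightarrow> nat"
  assume "e > 0"
  obtain \<delta> where \<delta>: "\<delta> > 0" "\<And>t. 0 \<le> t \<Longrightarrow> H t < \<delta> \<Longrightarrow> t < e / 2"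
    using prop_H_modulus[OF assms(5,3)] \<open>e > 0\<close> half_gt_zero by blast
  obtain \<eta> where \<eta>: "\<eta> > 0" "\<And>t. 0 \<le> t \<Longrightarrow> t < \<eta> \<Longrightarrow> G t < \<delta> / 2"
    using prop_G_modulus[OF assms(4)] \<delta>(1) half_gt_zero by blast
  obtain r :: nat where r: "1 / (real r + 1) < \<delta> / 2"
    using \<delta>(1) by (metis half_gt_zero nat_approx_posE of_nat_Suc add.commute)
  have "\<forall>n. \<exists>k. \<forall>p\<in>AF Ft k. \<forall>l\<le>g n.
      H (dist (x (n + l)) p) < G (dist (x n) p) + 1 / (real r + 1)"
    using assms(6) unfolding uniformly_GH_fejer_def by blast
  then obtain k where k: "\<And>n p l. p \<in> AF Ft (k n) \<Longrightarrow> l \<le> g n \<Longrightarrow>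
      H (dist (x (n + l)) p) < G (dist (x n) p) + 1 / (real r + 1)"
    by metis
  obtain \<nu> :: "nat \<Rightarrow> nat" where \<nu>: "\<And>i j. i < j \<Longrightarrow> x (\<nu> j) \<in> AF Ft (k (\<nu> i))"
    using approx_F_points_nested_indices[OF assms(7)] by blast
  obtain i j where "i < j" and close: "dist (x (\<nu> i)) (x (\<nu> j)) < \<eta>"
    using totally_bounded_obtains_close_terms[OF assms(1,2) \<eta>(1)] by blast
  define n p where "n = \<nu> i" and "p = x (\<nu> j)"
  have p_in: "p \<in> AF Ft (k n)"
    using \<nu>[OF \<open>i < j\<close>] by (simp add: n_def p_def)
  have G_small: "G (dist (x n) p) < \<delta> / 2"
    using \<eta>(2) close by (simp add: n_def p_def)
  have near_p: "dist (x (n + l)) p < e / 2" if "l \<le> g n" for l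
  proof -
    have "H (dist (x (n + l)) p) < G (dist (x n) p) + 1 / (real r + 1)"
      by (rule k[OF p_in that])
    with G_small r have "H (dist (x (n + l)) p) < \<delta>" by linarith
    then show ?thesis using \<delta>(2) by simp
  qed
  have "dist (x n) (x (n + l)) < e" if "l \<le> g n" for l
    using near_p[of 0] near_p[OF that] dist_triangle_half_l[of "x n" p] by simp
  then show "\<exists>n. \<forall>l\<le>g n. dist (x n) (x (n + l)) < e" by auto
qed

theorem corollary5p2:
  fixes X :: "'a::metric_space set" and F :: "'a set" and Ft :: "nat \<Rightarrow> 'a set"
    and G H :: "real \<Rightarrow> real" and x :: "nat \<Rightarrow> 'a"
  assumes "totally_bounded X"
    and "F \<noteq> {}" and "F \<subseteq> X"
    and "\<And>k. Ft k \<subseteq> X" and "F = (\<Inter>k. Ft k)"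
    and "\<And>t. t \<ge> 0 \<Longrightarrow> G t \<ge> 0" and "\<And>t. t \<ge> 0 \<Longrightarrow> H t \<ge> 0"
    and "prop_G G" and "prop_H H"
    and "\<And>n. x n \<in> X"
    and "uniformly_GH_fejer G H Ft x"
    and "has_approx_F_points Ft x"
  shows "Cauchy x"
  using uniformly_GH_fejer_imp_metastable[OF assms(1,10,7,8,9,11,12)]
  by (rule metastable_imp_Cauchy)

end
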